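(* Let $s\ge4$, $d=s-3$, $V=\mathbb{F}_2^s$, and let $\mathbf b_{12},\mathbf b_{13},\mathbf b_{23}\in\mathbb{F}_2^d$ (with $\mathbf b_{ji}:=\mathbf b_{ij}$, $\mathbf b_{ii}:=\mathbf 0$) be such that the symmetric zero-diagonal matrix $\Theta=(\mathbf b_{ij})_{1\le i,j\le3}$ has no nontrivial $\mathbb{F}_2$-linear combination of its columns equal to zero. Let $\circ$ be the operation on $V$ $$x\circ y=x+y+\Big(0,0,0,\sum_{1\le i<j\le3}(x_iy_j+x_jy_i)\mathbf b_{ij}\Big).$$ Let $\lambda\in\mathbb{F}_2^{s\times s}$ (acting on row vectors by $x\mapsto x\lambda$). Then $\lambda\in H_\circ$ if and only if $$\lambda=\begin{pmatrix}A&B\\ 0_{d,3}&D\end{pmatrix}$$ for some $A\in\mathrm{GL}(\mathbb{F}_2^3)$, $D\in\mathrm{GL}(\mathbb{F}_2^d)$ and $B\in\mathbb{F}_2^{3\times d}$ satisfying, for all $1\le i<j\le3$, the compatibility equations $$\mathbf b_{ij}D=\sum_{1\le k_1<k_2\le3}\big(A_{ik_1}A_{jk_2}+A_{ik_2}A_{jk_1}\big)\mathbf b_{k_1k_2},$$ where $A_{kl}$ denotes the $(k,l)$ entry of $A$.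
   Context: The operation $\circ$ is an alternative operation on $V$ (its translations $x\mapsto x\circ a$ form an elementary abelian regular group of xor-affine maps) with weak key space $\{k: x\circ k=x+k\ \forall x\}$ equal to the span of the last $d$ canonical vectors. $H_\circ$ is the group of maps $f\in\mathrm{GL}(V,+)$ with $(a\circ b)f=af\circ bf$ for all $a,b\in V$ (postfix notation). Vectors $\mathbf b_{ij}$ are row vectors, so $\mathbf b_{ij}D$ is a vector-matrix product. *)

theory Defs
  imports "HOL-Library.Z2" "Jordan_Normal_Form.Matrix"
begin

text \<open>Vectors of V = F_2^s are elements of carrier_vec s,
  coordinates are indexed 0..s-1 (paper's coordinate i is index i-1).
  Vectors b_12, b_13, b_23 in F_2^d are given as b01, b02, b12 (0-based).\<close>

definition row_mult :: "'a::semiring_0 vec \<Rightarrow> 'a mat \<Rightarrow> 'a vec" where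
  "row_mult x A = vec (dim_col A) (\<lambda>j. \<Sum>i<dim_vec x. x $ i * A $$ (i, j))"

definition bsym :: "'a::zero vec \<Rightarrow> 'a vec \<Rightarrow> 'a vec \<Rightarrow> nat \<Rightarrow> nat \<Rightarrow> 'a vec" where
  "bsym b01 b02 b12 i j =
     (if {i, j} = {0, 1} then b01
      else if {i, j} = {0, 2} then b02
      else if {i, j} = {1, 2} then b12
      else 0\<^sub>v (dim_vec b01))"

definition theta_nondeg :: "nat \<Rightarrow> bit vec \<Rightarrow> bit vec \<Rightarrow> bit vec \<Rightarrow> bool" where
  "theta_nondeg d b01 b02 b12 \<longleftrightarrow>
     (\<forall>c :: nat \<Rightarrow> bit.
        (\<forall>i<3. \<forall>l<d. (\<Sum>j<3. c j * (bsym b01 b02 b12 i j $ l)) = 0)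
        \<longrightarrow> (\<forall>j<3. c j = 0))"

definition pairs3 :: "(nat \<times> nat) set" where
  "pairs3 = {(i, j). i < j \<and> j < 3}"

definition circ_op :: "nat \<Rightarrow> bit vec \<Rightarrow> bit vec \<Rightarrow> bit vec \<Rightarrow> bit vec \<Rightarrow> bit vec \<Rightarrow> bit vec" where
  "circ_op s b01 b02 b12 x y =
     x + y + vec s (\<lambda>k. if k < 3 then 0
        else (\<Sum>(i, j)\<in>pairs3. (x $ i * y $ j + x $ j * y $ i) * (bsym b01 b02 b12 i j $ (k - 3))))"

definition in_H_circ :: "nat \<Rightarrow> (bit vec \<Rightarrow> bit vec \<Rightarrow> bit vec) \<Rightarrow> bit mat \<Rightarrow> bool" where
  "in_H_circ s circ L \<longleftrightarrow>
     L \<in> carrier_mat s s \<and>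
     bij_betw (\<lambda>x. row_mult x L) (carrier_vec s) (carrier_vec s) \<and>
     (\<forall>a\<in>carrier_vec s. \<forall>b\<in>carrier_vec s.
        row_mult (circ a b) L = circ (row_mult a L) (row_mult b L))"

end

theory Submission
  imports Defs "Jordan_Normal_Form.Determinant"
begin

(* Write x = (u, w) with u in F_2^3.  Then x \<circ> y = x + y + (0, \<theta>(x, y)), where
   \<theta>(x, y) = \<Sum>_{i<j} (x_i y_j + x_j y_i) b_ij is a symmetric, alternating bilinear map that
   only sees the first three coordinates.  For L = [A B; C D], linearity reduces preservation
   of \<circ> to \<theta>(x, y) C = 0 and \<theta>(x, y) D = \<theta>(xL, yL).  If x lies in the last d coordinates,
   then \<theta>(x, -) = 0, so \<theta>(xL, -) vanishes on the image of L, which is all of V; nondegeneracy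
   of \<Theta> then kills the rows of C.  Once C = 0, both sides of the remaining condition are
   bilinear in the first three coordinates of x and y, and since \<theta> is alternating they agree
   for all x, y exactly when they agree on the pairs (e_i, e_j), i < j: these are the
   compatibility equations. *)

(* Keep ring arithmetic on bit: by default simp turns + and * into XOR and AND. *)
declare add_bit_eq_xor [simp del] mult_bit_eq_and [simp del]

lemma dim_row_mult [simp]: "dim_vec (row_mult x A) = dim_col A"
  by (simp add: row_mult_def)

lemma index_row_mult [simp]:
  "j < dim_col A \<Longrightarrow> row_mult x A $ j = (\<Sum>i<dim_vec x. x $ i * A $$ (i, j))"
  by (simp add: row_mult_def)

lemma row_mult_carrier [simp]: "A \<in> carrier_mat m n \<Longrightarrow> row_mult x A \<in> carrier_vec n"
  by (simp add: carrier_vecI)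

lemma row_mult_eq_transpose_mult_vec:
  fixes A :: "'a :: comm_semiring_0 mat"
  assumes "dim_vec x = dim_row A"
  shows "row_mult x A = transpose_mat A *\<^sub>v x"
  using assms
  by (intro eq_vecI) (auto simp: scalar_prod_def lessThan_atLeast0 mult.commute intro!: sum.cong)

lemma row_mult_add:
  fixes A :: "'a :: comm_semiring_0 mat"
  assumes "A \<in> carrier_mat m n" "x \<in> carrier_vec m" "y \<in> carrier_vec m"
  shows "row_mult (x + y) A = row_mult x A + row_mult y A"
  using assms by (simp add: row_mult_eq_transpose_mult_vec mult_add_distrib_mat_vec[of _ n m])

lemma row_mult_zero_vec [simp]: "row_mult (0\<^sub>v m) (A :: 'a :: semiring_0 mat) = 0\<^sub>v (dim_col A)"
  by (intro eq_vecI) simp_all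

lemma row_mult_zero_mat [simp]:
  "x \<in> carrier_vec m \<Longrightarrow> row_mult x (0\<^sub>m m n :: 'a :: semiring_0 mat) = 0\<^sub>v n"
  by (intro eq_vecI) simp_all

lemma row_mult_unit_vec:
  fixes A :: "'a :: semiring_1 mat"
  assumes "A \<in> carrier_mat m n" "i < m"
  shows "row_mult (unit_vec m i) A = row A i"
  using assms by (intro eq_vecI) (simp_all add: if_distrib[of "\<lambda>c. c * _"] sum.delta cong: if_cong)

lemma row_mult_four_block_mat:
  fixes A :: "'a :: comm_semiring_0 mat"
  assumes "A \<in> carrier_mat nr1 nc1" "B \<in> carrier_mat nr1 nc2"
    "C \<in> carrier_mat nr2 nc1" "D \<in> carrier_mat nr2 nc2"
    "u \<in> carrier_vec nr1" "w \<in> carrier_vec nr2"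
  shows "row_mult (u @\<^sub>v w) (four_block_mat A B C D) =
    (row_mult u A + row_mult w C) @\<^sub>v (row_mult u B + row_mult w D)"
  using assms
  by (simp add: row_mult_eq_transpose_mult_vec transpose_four_block_mat four_block_mat_mult_vec[of _ nc1 nr1 _ nr2 _ nc2])

lemma index_row_mult_four_block_mat_lower_left_zero:
  fixes A :: "'a :: comm_semiring_0 mat"
  assumes "A \<in> carrier_mat nr1 nc1" "B \<in> carrier_mat nr1 nc2" "D \<in> carrier_mat nr2 nc2"
    "x \<in> carrier_vec (nr1 + nr2)" "k < nc1"
  shows "row_mult x (four_block_mat A B (0\<^sub>m nr2 nc1) D) $ k = row_mult (vec_first x nr1) A $ k"
proof -
  have "row_mult x (four_block_mat A B (0\<^sub>m nr2 nc1) D) =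
      row_mult (vec_first x nr1) A @\<^sub>v (row_mult (vec_first x nr1) B + row_mult (vec_last x nr2) D)"
    using row_mult_four_block_mat[OF assms(1,2) zero_carrier_mat assms(3)
        vec_first_carrier[of x] vec_last_carrier[of x]] assms by simp
  then show ?thesis using assms by simp
qed

lemma invertible_mat_iff_det:
  fixes A :: "'a :: field mat"
  assumes A: "A \<in> carrier_mat n n"
  shows "invertible_mat A \<longleftrightarrow> det A \<noteq> 0"
proof
  assume "invertible_mat A"
  then obtain B where AB: "A * B = 1\<^sub>m n" and BA: "B * A = 1\<^sub>m (dim_row B)"
    using A unfolding invertible_mat_def inverts_mat_def by auto
  then have "B \<in> carrier_mat n n"
    using A by (metis carrier_matD carrier_matI index_mult_mat(2,3) index_one_mat(2,3))
  then have "det A * det B = 1" using det_mult[OF A, symmetric] AB by simp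
  then show "det A \<noteq> 0" by auto
next
  assume "det A \<noteq> 0"
  from det_non_zero_imp_unit[OF A this, of "()"] show "invertible_mat A"
    using A unfolding Units_def ring_mat_def invertible_mat_def inverts_mat_def by auto
qed

lemma bij_betw_row_mult_iff_det:
  fixes L :: "'a :: field mat"
  assumes L: "L \<in> carrier_mat n n"
  shows "bij_betw (\<lambda>x. row_mult x L) (carrier_vec n) (carrier_vec n) \<longleftrightarrow> det L \<noteq> 0"
proof -
  have LT: "transpose_mat L \<in> carrier_mat n n" using L by simp
  have map_eq: "bij_betw (\<lambda>x. row_mult x L) (carrier_vec n) (carrier_vec n) \<longleftrightarrow>
      bij_betw (\<lambda>x. transpose_mat L *\<^sub>v x) (carrier_vec n) (carrier_vec n)"
    using L by (intro bij_betw_cong) (simp add: row_mult_eq_transpose_mult_vec)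
  show ?thesis
  proof
    assume bij: "bij_betw (\<lambda>x. row_mult x L) (carrier_vec n) (carrier_vec n)"
    show "det L \<noteq> 0"
    proof
      assume "det L = 0"
      then obtain v where v: "v \<in> carrier_vec n" "v \<noteq> 0\<^sub>v n" "transpose_mat L *\<^sub>v v = 0\<^sub>v n"
        using det_0_iff_vec_prod_zero_field[OF LT] det_transpose[OF L] by auto
      then have "row_mult v L = row_mult (0\<^sub>v n) L"
        using L by (simp add: row_mult_eq_transpose_mult_vec)
      with v bij show False unfolding bij_betw_def inj_on_def by (metis zero_carrier_vec)
    qed
  next
    assume "det L \<noteq> 0"
    then have "det (transpose_mat L) \<noteq> 0" using det_transpose[OF L] by simp
    from det_non_zero_imp_unit[OF LT this, of "()"]
    obtain M where M: "M \<in> carrier_mat n n" "M * transpose_mat L = 1\<^sub>m n" "transpose_mat L * M = 1\<^sub>m n"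
      unfolding Units_def ring_mat_def by auto
    have "bij_betw (\<lambda>x. transpose_mat L *\<^sub>v x) (carrier_vec n) (carrier_vec n)"
      by (rule bij_betw_byWitness[where f' = "\<lambda>y. M *\<^sub>v y"])
        (use M LT in \<open>auto simp flip: assoc_mult_mat_vec\<close>)
    then show "bij_betw (\<lambda>x. row_mult x L) (carrier_vec n) (carrier_vec n)" using map_eq by simp
  qed
qed

lemma add_vec_left_cancel:
  fixes u v w :: "'a :: group_add vec"
  assumes "u \<in> carrier_vec n" "v \<in> carrier_vec n" "w \<in> carrier_vec n"
  shows "u + v = u + w \<longleftrightarrow> v = w"
proof
  assume "u + v = u + w"
  then have "\<And>i. i < n \<Longrightarrow> u $ i + v $ i = u $ i + w $ i"
    using assms by (metis carrier_vecD index_add_vec(1))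
  then show "v = w" using assms by (intro eq_vecI) auto
qed simp

lemma sum_lessThan_3: "(\<Sum>i<3. f (i :: nat)) = f 0 + f 1 + (f 2 :: 'a :: comm_monoid_add)"
  by (simp add: eval_nat_numeral ac_simps)

lemma pairs3_eq: "pairs3 = {(0, 1), (0, 2), (1, 2)}"
  unfolding pairs3_def by (auto simp: less_Suc_eq numeral_3_eq_3)

lemma sum_pairs3: "(\<Sum>(i, j)\<in>pairs3. f i j) = f 0 1 + f 0 2 + (f 1 2 :: 'a :: comm_monoid_add)"
  by (simp add: pairs3_eq add.assoc)

lemma sum_pairs3_symmetrize:
  fixes g :: "nat \<Rightarrow> nat \<Rightarrow> 'a :: comm_monoid_add"
  assumes "\<And>i. i < 3 \<Longrightarrow> g i i = 0"
  shows "(\<Sum>i<3. \<Sum>j<3. g i j) = (\<Sum>(i, j)\<in>pairs3. g i j + g j i)"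
  using assms by (simp add: sum_lessThan_3 sum_pairs3 ac_simps)

lemma bilinear_form_compose:
  fixes x y :: "'i \<Rightarrow> 'a :: comm_semiring_0"
  shows "(\<Sum>k1\<in>K. \<Sum>k2\<in>K. (\<Sum>i\<in>I. x i * a i k1) * (\<Sum>j\<in>I. y j * a j k2) * g k1 k2) =
    (\<Sum>i\<in>I. \<Sum>j\<in>I. x i * y j * (\<Sum>k1\<in>K. \<Sum>k2\<in>K. a i k1 * a j k2 * g k1 k2))"
proof -
  have swap: "\<And>F. (\<Sum>k\<in>K. \<Sum>i\<in>I. F k i) = (\<Sum>i\<in>I. \<Sum>k\<in>K. F k i)" by (rule sum.swap)
  show ?thesis
    by (simp add: sum_distrib_left sum_distrib_right mult_ac swap) (subst sum.swap, simp add: mult_ac)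
qed

lemma bsym_commute: "bsym b01 b02 b12 i j = bsym b01 b02 b12 j i"
  by (simp add: bsym_def insert_commute)

lemma bsym_diag: "bsym b01 b02 b12 i i = 0\<^sub>v (dim_vec b01)"
  by (auto simp: bsym_def doubleton_eq_iff)

definition theta_form :: "'a :: comm_semiring_1 vec \<Rightarrow> 'a vec \<Rightarrow> 'a vec \<Rightarrow>
    (nat \<Rightarrow> 'a) \<Rightarrow> (nat \<Rightarrow> 'a) \<Rightarrow> 'a vec" where
  "theta_form b01 b02 b12 x y = vec (dim_vec b01)
     (\<lambda>l. \<Sum>(i, j)\<in>pairs3. (x i * y j + x j * y i) * (bsym b01 b02 b12 i j $ l))"

locale theta_family =
  fixes d :: nat and b01 b02 b12 :: "bit vec"
  assumes carrier_b01: "b01 \<in> carrier_vec d"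
    and carrier_b02: "b02 \<in> carrier_vec d"
    and carrier_b12: "b12 \<in> carrier_vec d"
begin

abbreviation \<Theta> where "\<Theta> \<equiv> bsym b01 b02 b12"
abbreviation \<theta> where "\<theta> \<equiv> theta_form b01 b02 b12"

lemma bsym_carrier: "\<Theta> i j \<in> carrier_vec d"
  using carrier_b01 carrier_b02 carrier_b12 by (simp add: bsym_def)

lemma dim_bsym [simp]: "dim_vec (\<Theta> i j) = d"
  using bsym_carrier by (metis carrier_vecD)

lemma dim_theta_form [simp]: "dim_vec (\<theta> x y) = d"
  using carrier_b01 by (simp add: theta_form_def)

lemma theta_form_carrier [simp]: "\<theta> x y \<in> carrier_vec d"
  by (simp add: carrier_vecI)

lemma index_theta_form:
  "l < d \<Longrightarrow> \<theta> x y $ l = (\<Sum>(i, j)\<in>pairs3. (x i * y j + x j * y i) * (\<Theta> i j $ l))"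
  using carrier_b01 by (simp add: theta_form_def)

lemma theta_form_cong:
  "(\<And>i. i < 3 \<Longrightarrow> x i = x' i) \<Longrightarrow> (\<And>i. i < 3 \<Longrightarrow> y i = y' i) \<Longrightarrow> \<theta> x y = \<theta> x' y'"
  by (simp add: theta_form_def sum_pairs3)

lemma theta_form_zero_left: "\<theta> (\<lambda>_. 0) y = 0\<^sub>v d"
  using carrier_b01 by (intro eq_vecI) (simp_all add: theta_form_def)

lemma theta_form_commute: "\<theta> x y = \<theta> y x"
  by (simp add: theta_form_def add.commute mult.commute)

lemma theta_form_alternating: "\<theta> x x = 0\<^sub>v d"
  using carrier_b01 by (intro eq_vecI) (simp_all add: theta_form_def mult.commute)

lemma index_theta_form_double_sum:
  assumes "l < d"
  shows "\<theta> x y $ l = (\<Sum>i<3. \<Sum>j<3. x i * y j * (\<Theta> i j $ l))"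
proof -
  have "\<Theta> i i $ l = 0" for i using assms carrier_b01 by (simp add: bsym_diag)
  then show ?thesis
    using assms by (simp add: sum_pairs3_symmetrize index_theta_form sum_pairs3 bsym_commute
       algebra_simps)
qed

lemma theta_form_units:
  assumes "(i, j) \<in> pairs3"
  shows "\<theta> (($) (unit_vec 3 i)) (($) (unit_vec 3 j)) = \<Theta> i j"
proof (rule eq_vecI)
  fix l assume "l < dim_vec (\<Theta> i j)"
  then have "l < d" using bsym_carrier by (metis carrier_vecD)
  with assms show "\<theta> (($) (unit_vec 3 i)) (($) (unit_vec 3 j)) $ l = \<Theta> i j $ l"
    by (auto simp: pairs3_eq index_theta_form sum_pairs3)
qed (use bsym_carrier in auto)

lemma theta_form_unit_right:
  assumes "i < 3" "l < d"
  shows "\<theta> x (($) (unit_vec 3 i)) $ l = (\<Sum>j<3. x j * (\<Theta> i j $ l))"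
proof -
  have "i = 0 \<or> i = 1 \<or> i = 2" using assms(1) by auto
  then show ?thesis
    using assms by (elim disjE) (simp_all add: index_theta_form_double_sum sum_lessThan_3 bsym_commute)
qed

lemma theta_nondeg_radical_zero:
  assumes "theta_nondeg d b01 b02 b12"
    and "\<And>i. i < 3 \<Longrightarrow> \<theta> x (($) (unit_vec 3 i)) = 0\<^sub>v d"
    and "j < 3"
  shows "x j = 0"
proof -
  have "\<forall>i<3. \<forall>l<d. (\<Sum>j<3. x j * (\<Theta> i j $ l)) = 0"
    using assms(2) by (metis theta_form_unit_right index_zero_vec(1))
  then show ?thesis using assms(1,3) unfolding theta_nondeg_def by blast
qed

lemma row_mult_theta_form:
  assumes "D \<in> carrier_mat d n" "l < n"
  shows "row_mult (\<theta> x y) D $ l =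
    (\<Sum>(i, j)\<in>pairs3. (x i * y j + x j * y i) * (row_mult (\<Theta> i j) D $ l))"
  using assms by (simp add: index_theta_form sum_pairs3 distrib_right sum.distrib sum_distrib_left mult.assoc)

lemma theta_form_congruence:
  assumes "A \<in> carrier_mat 3 3" "u \<in> carrier_vec 3" "v \<in> carrier_vec 3" "l < d"
  shows "\<theta> (($) (row_mult u A)) (($) (row_mult v A)) $ l =
    (\<Sum>(i, j)\<in>pairs3.
      (u $ i * v $ j + u $ j * v $ i) * (\<theta> (\<lambda>k. A $$ (i, k)) (\<lambda>k. A $$ (j, k)) $ l))"
proof -
  have "\<theta> (($) (row_mult u A)) (($) (row_mult v A)) $ l =
      (\<Sum>k1<3. \<Sum>k2<3. (\<Sum>i<3. u $ i * A $$ (i, k1)) * (\<Sum>j<3. v $ j * A $$ (j, k2)) * (\<Theta> k1 k2 $ l))"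
    using assms by (simp add: index_theta_form_double_sum)
  also have "\<dots> = (\<Sum>i<3. \<Sum>j<3. u $ i * v $ j * (\<theta> (\<lambda>k. A $$ (i, k)) (\<lambda>k. A $$ (j, k)) $ l))"
    using assms by (simp add: bilinear_form_compose index_theta_form_double_sum)
  also have "\<dots> = (\<Sum>(i, j)\<in>pairs3.
      (u $ i * v $ j + u $ j * v $ i) * (\<theta> (\<lambda>k. A $$ (i, k)) (\<lambda>k. A $$ (j, k)) $ l))"
    using assms by (subst sum_pairs3_symmetrize)
      (simp_all add: theta_form_alternating sum_pairs3 theta_form_commute algebra_simps)
  finally show ?thesis .
qed

abbreviation circ where "circ \<equiv> circ_op (3 + d) b01 b02 b12"

lemma circ_op_eq_add_tail:
  assumes "x \<in> carrier_vec (3 + d)" "y \<in> carrier_vec (3 + d)"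
  shows "circ x y = x + y + (0\<^sub>v 3 @\<^sub>v \<theta> (($) x) (($) y))"
  using assms carrier_b01 by (intro eq_vecI) (auto simp: circ_op_def theta_form_def)

lemma row_mult_circ_op_iff:
  assumes A: "A \<in> carrier_mat 3 3" and B: "B \<in> carrier_mat 3 d"
    and C: "C \<in> carrier_mat d 3" and D: "D \<in> carrier_mat d d"
    and x: "x \<in> carrier_vec (3 + d)" and y: "y \<in> carrier_vec (3 + d)"
  defines "L \<equiv> four_block_mat A B C D"
  shows "row_mult (circ x y) L = circ (row_mult x L) (row_mult y L) \<longleftrightarrow>
    row_mult (\<theta> (($) x) (($) y)) C = 0\<^sub>v 3 \<and>
    row_mult (\<theta> (($) x) (($) y)) D = \<theta> (($) (row_mult x L)) (($) (row_mult y L))"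
proof -
  have L: "L \<in> carrier_mat (3 + d) (3 + d)" using A D by (simp add: L_def)
  then have xL: "row_mult x L \<in> carrier_vec (3 + d)" and yL: "row_mult y L \<in> carrier_vec (3 + d)"
    by simp_all
  have tail: "row_mult (0\<^sub>v 3 @\<^sub>v \<theta> (($) x) (($) y)) L =
      row_mult (\<theta> (($) x) (($) y)) C @\<^sub>v row_mult (\<theta> (($) x) (($) y)) D"
    using row_mult_four_block_mat[OF A B C D zero_carrier_vec theta_form_carrier] A B C D
    by (simp add: L_def)
  have "row_mult (circ x y) L = (row_mult x L + row_mult y L) + row_mult (0\<^sub>v 3 @\<^sub>v \<theta> (($) x) (($) y)) L"
    using x y L by (simp add: circ_op_eq_add_tail row_mult_add del: assoc_add_vec)
  moreover have "circ (row_mult x L) (row_mult y L) =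
      (row_mult x L + row_mult y L) + (0\<^sub>v 3 @\<^sub>v \<theta> (($) (row_mult x L)) (($) (row_mult y L)))"
    using xL yL by (simp add: circ_op_eq_add_tail)
  ultimately have "row_mult (circ x y) L = circ (row_mult x L) (row_mult y L) \<longleftrightarrow>
      row_mult (0\<^sub>v 3 @\<^sub>v \<theta> (($) x) (($) y)) L =
      0\<^sub>v 3 @\<^sub>v \<theta> (($) (row_mult x L)) (($) (row_mult y L))"
    using add_vec_left_cancel[of "row_mult x L + row_mult y L" "3 + d"] xL yL L
    by (simp del: assoc_add_vec)
  then show ?thesis
    using tail append_vec_eq[OF row_mult_carrier[OF C] zero_carrier_vec] by simp
qed

lemma in_H_circ_lower_left_block_zero:
  assumes nondeg: "theta_nondeg d b01 b02 b12"
    and A: "A \<in> carrier_mat 3 3" and B: "B \<in> carrier_mat 3 d"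
    and C: "C \<in> carrier_mat d 3" and D: "D \<in> carrier_mat d d"
    and H: "in_H_circ (3 + d) circ (four_block_mat A B C D)"
  shows "C = 0\<^sub>m d 3"
proof (rule eq_matI)
  let ?L = "four_block_mat A B C D"
  fix k j assume "k < dim_row (0\<^sub>m d 3 :: bit mat)" "j < dim_col (0\<^sub>m d 3 :: bit mat)"
  then have k: "k < d" and j: "j < 3" by simp_all
  define e :: "bit vec" where "e = 0\<^sub>v 3 @\<^sub>v unit_vec d k"
  have e: "e \<in> carrier_vec (3 + d)" by (simp add: e_def)
  have eL: "row_mult e ?L $ p = C $$ (k, p)" if "p < 3" for p
    using row_mult_four_block_mat[OF A B C D zero_carrier_vec unit_vec_carrier] that k A C
    by (simp add: e_def row_mult_unit_vec)
  have "\<theta> (\<lambda>p. C $$ (k, p)) (($) (unit_vec 3 i)) = 0\<^sub>v d" if i: "i < 3" for i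
  proof -
    have "unit_vec (3 + d) i \<in> (\<lambda>x. row_mult x ?L) ` carrier_vec (3 + d)"
      using H unfolding in_H_circ_def bij_betw_def by simp
    then obtain y where y: "y \<in> carrier_vec (3 + d)" and yL: "row_mult y ?L = unit_vec (3 + d) i"
      by auto
    have "\<theta> (($) e) (($) y) = 0\<^sub>v d"
      by (subst theta_form_cong[of _ "\<lambda>_. 0" _ "($) y"]) (simp_all add: e_def theta_form_zero_left)
    then have "0\<^sub>v d = \<theta> (($) (row_mult e ?L)) (($) (row_mult y ?L))"
      using H e y D row_mult_circ_op_iff[OF A B C D e y] unfolding in_H_circ_def by simp
    also have "\<dots> = \<theta> (\<lambda>p. C $$ (k, p)) (($) (unit_vec 3 i))"
      using eL yL i by (intro theta_form_cong) simp_all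
    finally show ?thesis by simp
  qed
  then show "C $$ (k, j) = 0\<^sub>m d 3 $$ (k, j)"
    using theta_nondeg_radical_zero[OF nondeg _ j, of "\<lambda>p. C $$ (k, p)"] k j by simp
qed (use C in simp_all)

lemma in_H_circ_compatibility:
  assumes A: "A \<in> carrier_mat 3 3" and B: "B \<in> carrier_mat 3 d" and D: "D \<in> carrier_mat d d"
    and H: "in_H_circ (3 + d) circ (four_block_mat A B (0\<^sub>m d 3) D)"
    and ij: "(i, j) \<in> pairs3"
  shows "row_mult (\<Theta> i j) D = \<theta> (\<lambda>k. A $$ (i, k)) (\<lambda>k. A $$ (j, k))"
proof -
  let ?L = "four_block_mat A B (0\<^sub>m d 3) D"
  have C: "0\<^sub>m d 3 \<in> carrier_mat d 3" by simp
  define e :: "nat \<Rightarrow> bit vec" where "e p = unit_vec 3 p @\<^sub>v 0\<^sub>v d" for p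
  have e: "e p \<in> carrier_vec (3 + d)" for p by (simp add: e_def)
  have eL: "row_mult (e p) ?L $ k = A $$ (p, k)" if "p < 3" "k < 3" for p k
    using row_mult_four_block_mat[OF A B C D unit_vec_carrier zero_carrier_vec] that A D
    by (simp add: e_def row_mult_unit_vec)
  have i: "i < 3" and j: "j < 3" using ij by (auto simp: pairs3_def)
  have "row_mult (\<Theta> i j) D = row_mult (\<theta> (($) (e i)) (($) (e j))) D"
    using theta_form_cong[of "($) (e i)" "($) (unit_vec 3 i)" "($) (e j)" "($) (unit_vec 3 j)"]
      theta_form_units[OF ij] by (simp add: e_def)
  also have "\<dots> = \<theta> (($) (row_mult (e i) ?L)) (($) (row_mult (e j) ?L))"
    using H e row_mult_circ_op_iff[OF A B C D e e] unfolding in_H_circ_def by blast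
  also have "\<dots> = \<theta> (\<lambda>k. A $$ (i, k)) (\<lambda>k. A $$ (j, k))"
    using eL i j by (intro theta_form_cong) simp_all
  finally show ?thesis .
qed

lemma row_mult_theta_form_of_compatibility:
  assumes A: "A \<in> carrier_mat 3 3" and D: "D \<in> carrier_mat d d"
    and compat: "\<And>i j. (i, j) \<in> pairs3 \<Longrightarrow>
      row_mult (\<Theta> i j) D = \<theta> (\<lambda>k. A $$ (i, k)) (\<lambda>k. A $$ (j, k))"
    and u: "u \<in> carrier_vec 3" and v: "v \<in> carrier_vec 3"
  shows "row_mult (\<theta> (($) u) (($) v)) D = \<theta> (($) (row_mult u A)) (($) (row_mult v A))"
proof (rule eq_vecI)
  fix l assume "l < dim_vec (\<theta> (($) (row_mult u A)) (($) (row_mult v A)))"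
  then have l: "l < d" by simp
  have "row_mult (\<theta> (($) u) (($) v)) D $ l = (\<Sum>(i, j)\<in>pairs3.
      (u $ i * v $ j + u $ j * v $ i) * (\<theta> (\<lambda>k. A $$ (i, k)) (\<lambda>k. A $$ (j, k)) $ l))"
    unfolding row_mult_theta_form[OF D l] by (intro sum.cong) (auto simp: compat)
  also have "\<dots> = \<theta> (($) (row_mult u A)) (($) (row_mult v A)) $ l"
    using theta_form_congruence[OF A u v l] by simp
  finally show "row_mult (\<theta> (($) u) (($) v)) D $ l = \<theta> (($) (row_mult u A)) (($) (row_mult v A)) $ l" .
qed (use D in simp)

lemma in_H_circ_of_compatibility:
  assumes A: "A \<in> carrier_mat 3 3" "invertible_mat A" and B: "B \<in> carrier_mat 3 d"
    and D: "D \<in> carrier_mat d d" "invertible_mat D"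
    and compat: "\<And>i j. (i, j) \<in> pairs3 \<Longrightarrow>
      row_mult (\<Theta> i j) D = \<theta> (\<lambda>k. A $$ (i, k)) (\<lambda>k. A $$ (j, k))"
  shows "in_H_circ (3 + d) circ (four_block_mat A B (0\<^sub>m d 3) D)"
proof -
  let ?L = "four_block_mat A B (0\<^sub>m d 3) D"
  have L: "?L \<in> carrier_mat (3 + d) (3 + d)" using A D by simp
  have "det ?L \<noteq> 0"
    using det_four_block_mat_lower_left_zero[OF A(1) B refl D(1)] A D
    by (simp add: invertible_mat_iff_det)
  then have bij: "bij_betw (\<lambda>x. row_mult x ?L) (carrier_vec (3 + d)) (carrier_vec (3 + d))"
    using bij_betw_row_mult_iff_det[OF L] by simp
  have "row_mult (\<theta> (($) x) (($) y)) D = \<theta> (($) (row_mult x ?L)) (($) (row_mult y ?L))"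
    if x: "x \<in> carrier_vec (3 + d)" and y: "y \<in> carrier_vec (3 + d)" for x y
  proof -
    have "\<theta> (($) x) (($) y) = \<theta> (($) (vec_first x 3)) (($) (vec_first y 3))"
      by (intro theta_form_cong) (simp_all add: vec_first_def)
    also have "row_mult \<dots> D = \<theta> (($) (row_mult (vec_first x 3) A)) (($) (row_mult (vec_first y 3) A))"
      using row_mult_theta_form_of_compatibility[OF A(1) D(1) compat] by simp
    also have "\<dots> = \<theta> (($) (row_mult x ?L)) (($) (row_mult y ?L))"
      using index_row_mult_four_block_mat_lower_left_zero[OF A(1) B D(1)] x y
      by (intro theta_form_cong) simp_all
    finally show ?thesis .
  qed
  then show ?thesis
    using L bij row_mult_circ_op_iff[OF A(1) B zero_carrier_mat D(1)] unfolding in_H_circ_def by simp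
qed

theorem in_H_circ_iff_block_form:
  assumes nondeg: "theta_nondeg d b01 b02 b12" and L: "L \<in> carrier_mat (3 + d) (3 + d)"
  shows "in_H_circ (3 + d) circ L \<longleftrightarrow>
    (\<exists>A B D. A \<in> carrier_mat 3 3 \<and> invertible_mat A \<and>
       D \<in> carrier_mat d d \<and> invertible_mat D \<and> B \<in> carrier_mat 3 d \<and>
       L = four_block_mat A B (0\<^sub>m d 3) D \<and>
       (\<forall>(i, j)\<in>pairs3. row_mult (\<Theta> i j) D = \<theta> (\<lambda>k. A $$ (i, k)) (\<lambda>k. A $$ (j, k))))"
    (is "_ \<longleftrightarrow> ?block_form")
proof
  assume H: "in_H_circ (3 + d) circ L"
  obtain A B C D where split: "split_block L 3 3 = (A, B, C, D)" by (metis prod_cases4)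
  have A: "A \<in> carrier_mat 3 3" and B: "B \<in> carrier_mat 3 d" and C: "C \<in> carrier_mat d 3"
    and D: "D \<in> carrier_mat d d" and L_blocks: "L = four_block_mat A B C D"
    using split_block[OF split, of d d] L by auto
  have C0: "C = 0\<^sub>m d 3"
    using in_H_circ_lower_left_block_zero[OF nondeg A B C D] H L_blocks by simp
  have "det L \<noteq> 0" using H bij_betw_row_mult_iff_det[OF L] unfolding in_H_circ_def by simp
  then have "invertible_mat A" "invertible_mat D"
    using det_four_block_mat_lower_left_zero[OF A B C0 D] L_blocks A D
    by (simp_all add: invertible_mat_iff_det)
  moreover have "\<forall>(i, j)\<in>pairs3. row_mult (\<Theta> i j) D = \<theta> (\<lambda>k. A $$ (i, k)) (\<lambda>k. A $$ (j, k))"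
    using in_H_circ_compatibility[OF A B D] H L_blocks C0 by blast
  ultimately show ?block_form using A B D L_blocks C0 by blast
next
  assume ?block_form
  then show "in_H_circ (3 + d) circ L" using in_H_circ_of_compatibility by blast
qed

end

theorem theorem6:
  fixes s :: nat and b01 b02 b12 :: "bit vec" and L :: "bit mat"
  assumes "s \<ge> 4"
    and "b01 \<in> carrier_vec (s - 3)" and "b02 \<in> carrier_vec (s - 3)" and "b12 \<in> carrier_vec (s - 3)"
    and "theta_nondeg (s - 3) b01 b02 b12"
    and "L \<in> carrier_mat s s"
  shows "in_H_circ s (circ_op s b01 b02 b12) L \<longleftrightarrow>
    (\<exists>A B D. A \<in> carrier_mat 3 3 \<and> invertible_mat A \<and>
       D \<in> carrier_mat (s - 3) (s - 3) \<and> invertible_mat D \<and>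
       B \<in> carrier_mat 3 (s - 3) \<and>
       L = four_block_mat A B (0\<^sub>m (s - 3) 3) D \<and>
       (\<forall>(i, j)\<in>pairs3.
          row_mult (bsym b01 b02 b12 i j) D =
          vec (s - 3) (\<lambda>l. \<Sum>(k1, k2)\<in>pairs3.
             (A $$ (i, k1) * A $$ (j, k2) + A $$ (i, k2) * A $$ (j, k1)) *
             (bsym b01 b02 b12 k1 k2 $ l))))"
proof -
  define d where "d = s - 3"
  have s: "s = 3 + d" using assms(1) by (simp add: d_def)
  interpret theta_family d b01 b02 b12
    using assms(2-4) by unfold_locales (simp_all add: d_def)
  have theta_eq: "\<theta> x y =
      vec d (\<lambda>l. \<Sum>(k1, k2)\<in>pairs3. (x k1 * y k2 + x k2 * y k1) * (\<Theta> k1 k2 $ l))"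
    for x y using carrier_b01 by (simp add: theta_form_def)
  show ?thesis
    using in_H_circ_iff_block_form[of L] assms(5,6) s by (simp add: theta_eq)
qed

end
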